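(* Let $d\ge 1$ and let $P\subset\mathbb{R}^d$ be a finite set of $n\ge 1$ points. Then there exists $p\in P$ such that $p\in T$ for every orthant $T$ of fixed orientation with $|T\cap P|>(1-\frac{1}{d})n$.
   Context: An orthant of fixed orientation in $\mathbb{R}^d$ is a set of the form $\{x\in\mathbb{R}^d: x_j\le a_j \text{ for all } 1\le j\le d\}$ with $a_1,\dots,a_d\in\mathbb{R}$ (the intersection of $d$ halfspaces whose outward normals are the $d$ positive coordinate directions). *)

theory Defs
  imports "HOL-Analysis.Analysis"
begin

definition orthant :: "real^'n \<Rightarrow> (real^'n) set" where
  "orthant a = {x. \<forall>j. x $ j \<le> a $ j}"

end

theory Submission
  imports Defs
begin

text \<open>Call a point of \<open>P\<close> low in coordinate \<open>j\<close> if fewer than \<open>n/d\<close> points of \<open>P\<close> have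
\<open>j\<close>-th coordinate at least its own. The low points in a fixed coordinate are all counted by
the lowest of them, so there are fewer than \<open>n/d\<close> of them, and fewer than \<open>n\<close> points are low
in some coordinate. Take \<open>p\<close> low in no coordinate. If \<open>p\<close> lies outside an orthant \<open>T\<close>, then
\<open>p\<^sub>j > a\<^sub>j\<close> for some \<open>j\<close>, so the at least \<open>n/d\<close> points \<open>y\<close> with \<open>y\<^sub>j \<ge> p\<^sub>j\<close> all miss \<open>T\<close>,
and \<open>|T \<inter> P| \<le> (1 - 1/d) n\<close>.\<close>

definition upper_set :: "('a \<Rightarrow> 'b::linorder) \<Rightarrow> 'a set \<Rightarrow> 'a \<Rightarrow> 'a set" where
  "upper_set f P x = {y \<in> P. f x \<le> f y}"

lemma card_low_points_less:
  fixes f :: "'a \<Rightarrow> 'b::linorder" and k :: real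
  assumes "finite P" and "k > 0"
  shows "real (card {x \<in> P. real (card (upper_set f P x)) < k}) < k"
    (is "real (card ?L) < k")
proof (cases "?L = {}")
  case True
  show ?thesis using \<open>k > 0\<close> by (simp only: True card.empty of_nat_0)
next
  case False
  have "finite ?L" using \<open>finite P\<close> by simp
  obtain m where m: "m \<in> ?L" "Min (f ` ?L) = f m"
    using obtains_MIN[OF \<open>finite ?L\<close> False] .
  have "f m \<le> f x" if "x \<in> ?L" for x
  proof -
    have "Min (f ` ?L) \<le> f x"
      using \<open>finite ?L\<close> that by (intro Min_le) auto
    then show ?thesis unfolding m(2) .
  qed
  then have "?L \<subseteq> upper_set f P m"
    unfolding upper_set_def by auto
  then have "card ?L \<le> card (upper_set f P m)"
    by (rule card_mono[rotated]) (simp add: upper_set_def \<open>finite P\<close>)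
  moreover have "real (card (upper_set f P m)) < k" using m(1) by simp
  ultimately show ?thesis by linarith
qed

lemma ex_point_avoiding_small_sets:
  assumes "finite P" and "finite I" and "\<And>i. i \<in> I \<Longrightarrow> finite (B i)"
    and "(\<Sum>i\<in>I. card (B i)) < card P"
  shows "\<exists>p\<in>P. \<forall>i\<in>I. p \<notin> B i"
proof (rule ccontr)
  assume "\<not> ?thesis"
  then have "P \<subseteq> (\<Union>i\<in>I. B i)" by blast
  then have "card P \<le> card (\<Union>i\<in>I. B i)"
    by (rule card_mono[rotated]) (use assms(2,3) in auto)
  also have "\<dots> \<le> (\<Sum>i\<in>I. card (B i))"
    using card_UN_le[OF \<open>finite I\<close>] .
  finally show False using assms(4) by simp
qed

lemma outside_orthant_card_upper_set:
  fixes P :: "(real^'n) set"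
  assumes "finite P" and "p \<notin> orthant a"
  shows "\<exists>j. card (upper_set (\<lambda>x. x $ j) P p) + card (orthant a \<inter> P) \<le> card P"
proof -
  obtain j where j: "a $ j < p $ j"
    using assms(2) unfolding orthant_def by (auto simp: not_le)
  have "upper_set (\<lambda>x. x $ j) P p \<subseteq> P - orthant a"
  proof
    fix y assume "y \<in> upper_set (\<lambda>x. x $ j) P p"
    then have "y \<in> P" and "a $ j < y $ j"
      using j by (simp_all add: upper_set_def)
    then show "y \<in> P - orthant a"
      unfolding orthant_def by (simp add: not_le) blast
  qed
  then have "card (upper_set (\<lambda>x. x $ j) P p) \<le> card (P - orthant a)"
    by (rule card_mono[rotated]) (simp add: \<open>finite P\<close>)
  also have "\<dots> = card P - card (orthant a \<inter> P)"
    using \<open>finite P\<close> by (simp add: card_Diff_subset_Int Int_commute)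
  finally have "card (upper_set (\<lambda>x. x $ j) P p) \<le> card P - card (orthant a \<inter> P)" .
  moreover have "card (orthant a \<inter> P) \<le> card P"
    using \<open>finite P\<close> by (simp add: card_mono)
  ultimately show ?thesis by (intro exI[of _ j]) linarith
qed

lemma ex_point_with_large_upper_sets:
  fixes f :: "'i::finite \<Rightarrow> 'a \<Rightarrow> 'b::linorder"
  assumes "finite P" and "P \<noteq> {}"
  shows "\<exists>p\<in>P. \<forall>j. real (card P) / real CARD('i) \<le> real (card (upper_set (f j) P p))"
proof -
  define k where "k = real (card P) / real CARD('i)"
  have "k > 0" using assms by (simp add: k_def card_gt_0_iff)
  define low where "low j = {x \<in> P. real (card (upper_set (f j) P x)) < k}" for j
  have "real (card (low j)) < k" for j
    unfolding low_def using card_low_points_less[OF \<open>finite P\<close> \<open>k > 0\<close>] .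
  then have "(\<Sum>j\<in>UNIV. real (card (low j))) < real CARD('i) * k"
    using sum_strict_mono[of UNIV "\<lambda>j. real (card (low j))" "\<lambda>_. k"] by simp
  then have card_low_sum: "(\<Sum>j\<in>UNIV. card (low j)) < card P"
    by (simp add: k_def flip: of_nat_sum)
  have finite_low: "finite (low j)" for j
    unfolding low_def using \<open>finite P\<close> by simp
  have "\<exists>p\<in>P. \<forall>j\<in>UNIV. p \<notin> low j"
    by (rule ex_point_avoiding_small_sets[OF \<open>finite P\<close> _ finite_low card_low_sum]) simp
  then show ?thesis unfolding low_def k_def by (auto simp: not_less)
qed

lemma in_orthant_if_large_upper_sets:
  fixes P :: "(real^'n) set"
  assumes "finite P" and "\<forall>j. k \<le> real (card (upper_set (\<lambda>x. x $ j) P p))"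
    and "real (card (orthant a \<inter> P)) > real (card P) - k"
  shows "p \<in> orthant a"
proof (rule ccontr)
  assume "p \<notin> orthant a"
  then obtain j where "card (upper_set (\<lambda>x. x $ j) P p) + card (orthant a \<inter> P) \<le> card P"
    using outside_orthant_card_upper_set[OF \<open>finite P\<close>] by blast
  then have "real (card (upper_set (\<lambda>x. x $ j) P p)) + real (card (orthant a \<inter> P)) \<le> real (card P)"
    by (simp only: of_nat_add[symmetric] of_nat_le_iff)
  then show False using assms(2)[rule_format, of j] assms(3) by linarith
qed

theorem corollary3:
  fixes P :: "(real^'n) set"
  assumes "finite P" and "P \<noteq> {}"
  shows "\<exists>p\<in>P. \<forall>a::real^'n.
           real (card (orthant a \<inter> P)) > (1 - 1 / real CARD('n)) * real (card P)
           \<longrightarrow> p \<in> orthant a"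
proof -
  obtain p where "p \<in> P"
    and large: "\<forall>j. real (card P) / real CARD('n) \<le> real (card (upper_set (\<lambda>x. x $ j) P p))"
    using ex_point_with_large_upper_sets[OF assms, of "\<lambda>j x. x $ j"] by blast
  have "(1 - 1 / real CARD('n)) * real (card P) = real (card P) - real (card P) / real CARD('n)"
    by (simp add: left_diff_distrib)
  then have "p \<in> orthant a"
    if "real (card (orthant a \<inter> P)) > (1 - 1 / real CARD('n)) * real (card P)" for a
    using in_orthant_if_large_upper_sets[OF \<open>finite P\<close> large] that by simp
  with \<open>p \<in> P\<close> show ?thesis by blast
qed

end
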